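(* Let $G$ be a graph of order $n$ with no isolated vertices and maximum degree $\Delta$. Then $\gamma_{\rm gr}^t(G) \ge \frac{n}{\Delta}$. Moreover, if $G$ is connected and $\gamma_{\rm gr}^t(G) = \frac{n}{\Delta}$, then $G \cong K_{\Delta,\Delta}$.
   Context: All graphs are finite, simple, without isolated vertices. $N(v)$ denotes the open neighborhood of $v$. A sequence $S=(v_1,\ldots,v_k)$ of distinct vertices of $G$ is a legal (open neighborhood) sequence if $N(v_i)\setminus \bigcup_{j=1}^{i-1} N(v_j)\neq\emptyset$ for every $i\in\{2,\ldots,k\}$. It is a total dominating sequence if moreover the set $\{v_1,\ldots,v_k\}$ is a total dominating set of $G$ (every vertex of $G$ has a neighbor in it). The Grundy total domination number $\gamma_{\rm gr}^t(G)$ is the maximum length of a total dominating sequence of $G$. *)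

theory Defs
  imports Complex_Main
begin

definition graph :: "'a set \<Rightarrow> ('a \<Rightarrow> 'a \<Rightarrow> bool) \<Rightarrow> bool" where
  "graph V E \<longleftrightarrow> finite V \<and> (\<forall>u v. E u v \<longrightarrow> u \<in> V \<and> v \<in> V)
     \<and> (\<forall>u v. E u v \<longrightarrow> E v u) \<and> (\<forall>v. \<not> E v v)"

definition nbhd :: "('a \<Rightarrow> 'a \<Rightarrow> bool) \<Rightarrow> 'a \<Rightarrow> 'a set" where
  "nbhd E v = {u. E v u}"

definition no_isolated :: "'a set \<Rightarrow> ('a \<Rightarrow> 'a \<Rightarrow> bool) \<Rightarrow> bool" where
  "no_isolated V E \<longleftrightarrow> (\<forall>v\<in>V. nbhd E v \<noteq> {})"

definition max_degree :: "'a set \<Rightarrow> ('a \<Rightarrow> 'a \<Rightarrow> bool) \<Rightarrow> nat" where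
  "max_degree V E = Max ((\<lambda>v. card (nbhd E v)) ` V)"

definition connected_graph :: "'a set \<Rightarrow> ('a \<Rightarrow> 'a \<Rightarrow> bool) \<Rightarrow> bool" where
  "connected_graph V E \<longleftrightarrow> (\<forall>u\<in>V. \<forall>v\<in>V. E\<^sup>*\<^sup>* u v)"

definition legal_seq :: "'a set \<Rightarrow> ('a \<Rightarrow> 'a \<Rightarrow> bool) \<Rightarrow> 'a list \<Rightarrow> bool" where
  "legal_seq V E S \<longleftrightarrow> distinct S \<and> set S \<subseteq> V \<and>
     (\<forall>i. 1 \<le> i \<and> i < length S \<longrightarrow>
        nbhd E (S ! i) - (\<Union>j<i. nbhd E (S ! j)) \<noteq> {})"

definition total_dominating_seq :: "'a set \<Rightarrow> ('a \<Rightarrow> 'a \<Rightarrow> bool) \<Rightarrow> 'a list \<Rightarrow> bool" where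
  "total_dominating_seq V E S \<longleftrightarrow> legal_seq V E S \<and> (\<forall>v\<in>V. \<exists>u\<in>set S. E v u)"

definition grundy_total_dom :: "'a set \<Rightarrow> ('a \<Rightarrow> 'a \<Rightarrow> bool) \<Rightarrow> nat" where
  "grundy_total_dom V E = Max (length ` {S. total_dominating_seq V E S})"

definition Kbip_V :: "nat \<Rightarrow> nat \<Rightarrow> (nat \<times> nat) set" where
  "Kbip_V m n = ({..<m} \<times> {0}) \<union> ({..<n} \<times> {1})"

definition Kbip_E :: "nat \<Rightarrow> nat \<Rightarrow> nat \<times> nat \<Rightarrow> nat \<times> nat \<Rightarrow> bool" where
  "Kbip_E m n x y \<longleftrightarrow> x \<in> Kbip_V m n \<and> y \<in> Kbip_V m n \<and> snd x \<noteq> snd y"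

definition graph_iso :: "'a set \<Rightarrow> ('a \<Rightarrow> 'a \<Rightarrow> bool) \<Rightarrow> 'b set \<Rightarrow> ('b \<Rightarrow> 'b \<Rightarrow> bool) \<Rightarrow> bool" where
  "graph_iso V E V' E' \<longleftrightarrow> (\<exists>f. bij_betw f V V' \<and>
     (\<forall>u\<in>V. \<forall>v\<in>V. E u v \<longleftrightarrow> E' (f u) (f v)))"

end

theory Submission
  imports Defs
begin

text \<open>Every total dominating sequence S satisfies n = |\<Union>N(S)| \<le> |S| \<Delta>, and every
  legal sequence extends to a total dominating one; this gives n \<le> \<gamma> \<Delta>. If
  n = \<gamma> \<Delta>, extending an arbitrary legal sequence S to a total dominating
  sequence S T of length at most \<gamma> forces |\<Union>N(S)| = |S| \<Delta>: the neighbourhoods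
  along any legal sequence are disjoint and of size \<Delta>. Applied to sequences of
  length one and two, this makes G \<Delta>-regular with any two neighbourhoods equal
  or disjoint, and a connected such graph is K_{\<Delta>,\<Delta>}.\<close>

lemma nbhd_subset: "graph V E \<Longrightarrow> nbhd E v \<subseteq> V"
  by (auto simp: graph_def nbhd_def)

lemma finite_nbhd: "graph V E \<Longrightarrow> finite (nbhd E v)"
  by (meson finite_subset graph_def nbhd_subset)

lemma card_nbhd_le_max_degree: "graph V E \<Longrightarrow> v \<in> V \<Longrightarrow> card (nbhd E v) \<le> max_degree V E"
  unfolding max_degree_def by (rule Max_ge) (auto simp: graph_def)

lemma max_degree_pos:
  assumes "graph V E" "V \<noteq> {}" "no_isolated V E"
  shows "max_degree V E > 0"
proof -
  obtain v where v: "v \<in> V" using assms(2) by auto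
  then have "card (nbhd E v) > 0"
    using assms(3) finite_nbhd[OF assms(1)] by (auto simp: no_isolated_def card_gt_0_iff)
  then show ?thesis using card_nbhd_le_max_degree[OF assms(1) v] by simp
qed

lemma card_Union_nbhd_le:
  assumes "graph V E" "set S \<subseteq> V"
  shows "card (\<Union>(nbhd E ` set S)) \<le> length S * max_degree V E"
  using assms(2)
proof (induction S)
  case Nil
  then show ?case by simp
next
  case (Cons a S)
  have "card (\<Union>(nbhd E ` set (a # S))) \<le> card (nbhd E a) + card (\<Union>(nbhd E ` set S))"
    by (simp add: card_Un_le)
  also have "\<dots> \<le> max_degree V E + length S * max_degree V E"
    using Cons card_nbhd_le_max_degree[OF assms(1)] by (intro add_mono) auto
  finally show ?case by simp
qed

lemma UN_nth_eq_UN_set: "(\<Union>j<length S. f (S ! j)) = \<Union>(f ` set S)"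
  by (auto simp: set_conv_nth)

lemma legal_seq_set: "legal_seq V E S \<Longrightarrow> set S \<subseteq> V"
  by (simp add: legal_seq_def)

lemma legal_seq_singleton: "u \<in> V \<Longrightarrow> legal_seq V E [u]"
  by (simp add: legal_seq_def)

lemma legal_seq_snoc:
  assumes "legal_seq V E S" "w \<in> V" "w \<notin> set S" "nbhd E w - \<Union>(nbhd E ` set S) \<noteq> {}"
  shows "legal_seq V E (S @ [w])"
  unfolding legal_seq_def
proof (intro conjI allI impI)
  show "distinct (S @ [w])" "set (S @ [w]) \<subseteq> V"
    using assms by (auto simp: legal_seq_def)
  fix i assume i: "1 \<le> i \<and> i < length (S @ [w])"
  have prefix: "(\<Union>j<i. nbhd E ((S @ [w]) ! j)) = (\<Union>j<i. nbhd E (S ! j))"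
    using i by (auto simp: nth_append)
  show "nbhd E ((S @ [w]) ! i) - (\<Union>j<i. nbhd E ((S @ [w]) ! j)) \<noteq> {}"
  proof (cases "i < length S")
    case True
    then show ?thesis using assms(1) i prefix by (auto simp: legal_seq_def nth_append)
  next
    case False
    then have "i = length S" using i by simp
    then show ?thesis using assms(4) prefix by (simp add: UN_nth_eq_UN_set)
  qed
qed

lemma legal_seq_pair:
  assumes "u \<in> V" "v \<in> V" "u \<noteq> v" "\<not> nbhd E v \<subseteq> nbhd E u"
  shows "legal_seq V E [u, v]"
  using legal_seq_snoc[OF legal_seq_singleton[of u V E], of v] assms by auto

lemma finite_legal_seqs: "graph V E \<Longrightarrow> finite {S. legal_seq V E S}"
  by (rule finite_subset[OF _ finite_subset_distinct[of V]]) (auto simp: legal_seq_def graph_def)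

lemma legal_seq_extends_to_tds:
  assumes g: "graph V E" and ni: "no_isolated V E" and "legal_seq V E S"
  shows "\<exists>T. total_dominating_seq V E (S @ T)"
  using assms(3)
proof (induction "card V - length S" arbitrary: S rule: less_induct)
  case (less S)
  show ?case
  proof (cases "\<forall>v\<in>V. \<exists>u\<in>set S. E v u")
    case True
    then have "total_dominating_seq V E (S @ [])"
      using less.prems by (simp add: total_dominating_seq_def)
    then show ?thesis ..
  next
    case False
    then obtain v where v: "v \<in> V" "\<forall>u\<in>set S. \<not> E v u" by auto
    then obtain w where w: "E v w" using ni by (auto simp: no_isolated_def nbhd_def)
    have wV: "w \<in> V" and vw: "v \<in> nbhd E w"
      using g w by (auto simp: graph_def nbhd_def)
    have v_new: "v \<notin> \<Union>(nbhd E ` set S)"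
      using g v by (auto simp: graph_def nbhd_def)
    have legal: "legal_seq V E (S @ [w])"
      using legal_seq_snoc[OF less.prems wV] v w vw v_new by blast
    have "length (S @ [w]) \<le> card V"
      using legal g distinct_card[of "S @ [w]"] card_mono
      by (metis graph_def legal_seq_def)
    then obtain T where "total_dominating_seq V E ((S @ [w]) @ T)"
      using less.hyps[OF _ legal] by fastforce
    then show ?thesis by auto
  qed
qed

lemma tds_exists:
  assumes "graph V E" "no_isolated V E"
  obtains S where "total_dominating_seq V E S"
  using legal_seq_extends_to_tds[OF assms, of "[]"] by (auto simp: legal_seq_def)

lemma tds_Union_nbhd: "graph V E \<Longrightarrow> total_dominating_seq V E S \<Longrightarrow> \<Union>(nbhd E ` set S) = V"
  by (auto simp: total_dominating_seq_def graph_def nbhd_def) metis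

lemma tds_length_le_grundy:
  assumes "graph V E" "total_dominating_seq V E S"
  shows "length S \<le> grundy_total_dom V E"
proof -
  have "finite {S. total_dominating_seq V E S}"
    using finite_legal_seqs[OF assms(1)]
    by (rule finite_subset[rotated]) (auto simp: total_dominating_seq_def)
  then show ?thesis unfolding grundy_total_dom_def using assms(2) by (intro Max_ge) auto
qed

lemma card_le_grundy_times_max_degree:
  assumes "graph V E" "no_isolated V E"
  shows "card V \<le> grundy_total_dom V E * max_degree V E"
proof -
  obtain S where S: "total_dominating_seq V E S" using tds_exists[OF assms] .
  have "card V \<le> length S * max_degree V E"
    using card_Union_nbhd_le[OF assms(1)] tds_Union_nbhd[OF assms(1) S] S
    by (metis legal_seq_set total_dominating_seq_def)
  also have "\<dots> \<le> grundy_total_dom V E * max_degree V E"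
    using tds_length_le_grundy[OF assms(1) S] by simp
  finally show ?thesis .
qed

lemma extremal_card_Union_nbhd:
  assumes g: "graph V E" and ni: "no_isolated V E"
    and eq: "card V = grundy_total_dom V E * max_degree V E"
    and S: "legal_seq V E S"
  shows "card (\<Union>(nbhd E ` set S)) = length S * max_degree V E"
proof -
  let ?\<Delta> = "max_degree V E"
  obtain T where T: "total_dominating_seq V E (S @ T)"
    using legal_seq_extends_to_tds[OF g ni S] by blast
  have TV: "set T \<subseteq> V"
    using T by (simp add: total_dominating_seq_def legal_seq_def)
  have "(length S + length T) * ?\<Delta> \<le> card V"
    using tds_length_le_grundy[OF g T] eq by simp
  also have "card V = card (\<Union>(nbhd E ` set S) \<union> \<Union>(nbhd E ` set T))"
    using tds_Union_nbhd[OF g T] by simp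
  also have "\<dots> \<le> card (\<Union>(nbhd E ` set S)) + length T * ?\<Delta>"
    using card_Un_le card_Union_nbhd_le[OF g TV] by (meson add_left_mono le_trans)
  finally have "length S * ?\<Delta> \<le> card (\<Union>(nbhd E ` set S))"
    by (simp add: add_mult_distrib)
  then show ?thesis
    using card_Union_nbhd_le[OF g legal_seq_set[OF S]] by simp
qed

lemma extremal_regular:
  assumes "graph V E" "no_isolated V E"
    and "card V = grundy_total_dom V E * max_degree V E" and "u \<in> V"
  shows "card (nbhd E u) = max_degree V E"
  using extremal_card_Union_nbhd[OF assms(1-3) legal_seq_singleton[OF assms(4)]] by simp

lemma extremal_nbhd_eq_or_disjoint:
  assumes g: "graph V E" and ni: "no_isolated V E"
    and eq: "card V = grundy_total_dom V E * max_degree V E"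
    and u: "u \<in> V" and v: "v \<in> V"
  shows "nbhd E u = nbhd E v \<or> nbhd E u \<inter> nbhd E v = {}"
proof -
  have disjoint: "nbhd E x \<inter> nbhd E y = {}"
    if x: "x \<in> V" and y: "y \<in> V" and "\<not> nbhd E y \<subseteq> nbhd E x" for x y
  proof -
    have "x \<noteq> y" using that by auto
    then have "card (nbhd E x \<union> nbhd E y) = card (nbhd E x) + card (nbhd E y)"
      using extremal_card_Union_nbhd[OF g ni eq legal_seq_pair[OF x y _ that(3)]]
        extremal_regular[OF g ni eq x] extremal_regular[OF g ni eq y] by simp
    then show ?thesis
      using card_Un_Int[of "nbhd E x" "nbhd E y"] finite_nbhd[OF g] by simp
  qed
  show ?thesis using disjoint[OF u v] disjoint[OF v u] by blast
qed

lemma graph_iso_Kbip: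
  assumes "V = A \<union> B" "A \<inter> B = {}" "finite A" "finite B"
    and edges: "\<And>x y. x \<in> V \<Longrightarrow> y \<in> V \<Longrightarrow> E x y \<longleftrightarrow> (x \<in> A \<longleftrightarrow> y \<in> B)"
  shows "graph_iso V E (Kbip_V (card A) (card B)) (Kbip_E (card A) (card B))"
proof -
  obtain hA where hA: "bij_betw hA A {..<card A}"
    using ex_bij_betw_finite_nat[OF assms(3)] by (auto simp: atLeast0LessThan)
  obtain hB where hB: "bij_betw hB B {..<card B}"
    using ex_bij_betw_finite_nat[OF assms(4)] by (auto simp: atLeast0LessThan)
  define f where "f w = (if w \<in> A then (hA w, 0::nat) else (hB w, 1))" for w
  have bijA: "bij_betw f A ({..<card A} \<times> {0})"
    using hA by (auto simp: bij_betw_def inj_on_def f_def)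
  have "bij_betw (\<lambda>w. (hB w, 1::nat)) B ({..<card B} \<times> {1})"
    using hB by (auto simp: bij_betw_def inj_on_def)
  then have bijB: "bij_betw f B ({..<card B} \<times> {1})"
    by (rule bij_betw_cong[THEN iffD1, rotated]) (use assms(2) in \<open>auto simp: f_def\<close>)
  have bij: "bij_betw f V (Kbip_V (card A) (card B))"
    unfolding assms(1) Kbip_V_def by (rule bij_betw_combine[OF bijA bijB]) auto
  have "E x y \<longleftrightarrow> Kbip_E (card A) (card B) (f x) (f y)" if "x \<in> V" "y \<in> V" for x y
    using edges[OF that] that bij_betwE[OF bij] assms(1,2) by (auto simp: Kbip_E_def f_def)
  then show ?thesis using bij unfolding graph_iso_def by blast
qed

text \<open>The two colour classes are the neighbourhoods of the ends of any edge;
  connectivity makes them exhaust V.\<close>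
lemma connected_nbhd_eq_or_disjoint_iso_Kbip:
  assumes g: "graph V E" and ni: "no_isolated V E" and conn: "connected_graph V E"
    and v0: "v0 \<in> V" and reg: "\<And>u. u \<in> V \<Longrightarrow> card (nbhd E u) = d"
    and dich: "\<And>u v. u \<in> V \<Longrightarrow> v \<in> V \<Longrightarrow> nbhd E u = nbhd E v \<or> nbhd E u \<inter> nbhd E v = {}"
  shows "graph_iso V E (Kbip_V d d) (Kbip_E d d)"
proof -
  obtain v where v0v: "E v0 v" using ni v0 by (auto simp: no_isolated_def nbhd_def)
  have sym: "E a b \<Longrightarrow> E b a" and inV: "E a b \<Longrightarrow> a \<in> V \<and> b \<in> V" for a b
    using g by (auto simp: graph_def)
  define A where "A = nbhd E v"
  define B where "B = nbhd E v0"
  have NA: "nbhd E x = B" if "x \<in> A" for x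
  proof -
    have "v \<in> nbhd E x \<inter> nbhd E v0" using that sym v0v by (auto simp: A_def nbhd_def)
    then show ?thesis using dich[of x v0] that inV v0 by (auto simp: A_def B_def nbhd_def)
  qed
  have NB: "nbhd E y = A" if "y \<in> B" for y
  proof -
    have "v0 \<in> nbhd E y \<inter> nbhd E v" using that sym v0v by (auto simp: B_def nbhd_def)
    then show ?thesis using dich[of y v] that inV v0v by (auto simp: A_def B_def nbhd_def)
  qed
  have v0A: "v0 \<in> A" using v0v sym by (auto simp: A_def nbhd_def)
  have V: "V = A \<union> B"
  proof
    show "A \<union> B \<subseteq> V" using inV by (auto simp: A_def B_def nbhd_def)
    show "V \<subseteq> A \<union> B"
    proof
      fix w assume "w \<in> V"
      then have "E\<^sup>*\<^sup>* v0 w" using conn v0 by (auto simp: connected_graph_def)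
      then show "w \<in> A \<union> B"
        by induction (use v0A NA NB in \<open>auto simp: nbhd_def\<close>)
    qed
  qed
  have AB: "A \<inter> B = {}"
  proof (rule ccontr)
    assume "A \<inter> B \<noteq> {}"
    then have "A = B" using NA NB by blast
    then show False using v0A g by (auto simp: B_def nbhd_def graph_def)
  qed
  have "card A = d" "card B = d"
    using reg v0 inV[OF v0v] by (auto simp: A_def B_def)
  moreover have "E x y \<longleftrightarrow> (x \<in> A \<longleftrightarrow> y \<in> B)" if "x \<in> V" "y \<in> V" for x y
    using NA NB that V AB by (auto simp: nbhd_def)
  ultimately show ?thesis
    using graph_iso_Kbip[OF V AB] finite_nbhd[OF g] by (auto simp: A_def B_def)
qed

theorem mainTheorem1:
  fixes V :: "'a set" and E :: "'a \<Rightarrow> 'a \<Rightarrow> bool"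
  assumes "graph V E" and "V \<noteq> {}" and "no_isolated V E"
  shows "real (grundy_total_dom V E) \<ge> real (card V) / real (max_degree V E) \<and>
           (connected_graph V E \<and>
            real (grundy_total_dom V E) = real (card V) / real (max_degree V E) \<longrightarrow>
           graph_iso V E (Kbip_V (max_degree V E) (max_degree V E))
                         (Kbip_E (max_degree V E) (max_degree V E)))"
proof -
  let ?\<gamma> = "grundy_total_dom V E" and ?\<Delta> = "max_degree V E"
  have pos: "real ?\<Delta> > 0" using max_degree_pos[OF assms] by simp
  have "real (card V) \<le> real ?\<gamma> * real ?\<Delta>"
    using card_le_grundy_times_max_degree[OF assms(1,3)] by (metis of_nat_le_iff of_nat_mult)
  moreover have "real (card V) = real ?\<gamma> * real ?\<Delta> \<Longrightarrow> card V = ?\<gamma> * ?\<Delta>"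
    by (metis of_nat_eq_iff of_nat_mult)
  moreover obtain v0 where "v0 \<in> V" using assms(2) by auto
  ultimately show ?thesis
    using pos connected_nbhd_eq_or_disjoint_iso_Kbip[OF assms(1,3)]
      extremal_regular[OF assms(1,3)] extremal_nbhd_eq_or_disjoint[OF assms(1,3)]
    by (simp add: divide_le_eq)
qed

end
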